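(* Let $f$ be a symmetric norm on $\mathbb R^n$, $\mathcal H$ a complex Hilbert space with $\dim\mathcal H\ge n$, and $\|A\|=f(s_1(A),\dots,s_n(A))$ for $A\in\mathcal B(\mathcal H)$. Let $\mathcal S\subseteq\mathbb R^n$ be any compact set of vectors $c=(c_1,\dots,c_n)$ with $c_1\ge\cdots\ge c_n\ge0$ such that $\|A\|=\max\{\sum_{j=1}^n c_js_j(A): c\in\mathcal S\}$ for all $A\in\mathcal B(\mathcal H)$. Then $\|\cdot\|$ is submultiplicative (i.e. $\|AB\|\le\|A\|\|B\|$ for all $A,B\in\mathcal B(\mathcal H)$) if and only if any one of the following holds: (1) $\|A\|\ge s_1(A)$ for all $A\in\mathcal B(\mathcal H)$; (2) there are unit vectors $x,y\in\mathcal H$ such that $\|xy^*\|\ge1$; (3) $f(e_1)\ge1$, equivalently, there is $(c_1,\dots,c_n)\in\mathcal S$ with $c_1\ge1$. Moreover, $\|\cdot\|$ is an algebra norm (submultiplicative with $\|I\|=1$) if and only if it is the operator norm.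
   Context: $\mathcal B(\mathcal H)$ is the algebra of bounded linear operators on $\mathcal H$; $s_k(A)=\inf\{\|A-X\|_{\rm sp}:\operatorname{rank}X<k\}$ is the $k$th singular value, with $\|\cdot\|_{\rm sp}$ the operator norm. A norm $f$ on $\mathbb R^n$ is symmetric if $f(Px)=f(x)$ for all $x$ and every permutation or diagonal orthogonal matrix $P$. $e_1$ is the first standard basis vector of $\mathbb R^n$; $xy^*$ denotes $v\mapsto\langle v,y\rangle x$. (Such a set $\mathcal S$ always exists.) *)

theory Defs
  imports "HOL-Analysis.Analysis"
begin

class chilbert = banach +
  fixes scaleC :: "complex \<Rightarrow> 'a \<Rightarrow> 'a"  (infixr \<open>*\<^sub>C\<close> 75)
    and cinner :: "'a \<Rightarrow> 'a \<Rightarrow> complex"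
  assumes scaleC_of_real: "scaleC (complex_of_real r) x = scaleR r x"
    and scaleC_add_right: "scaleC a (x + y) = scaleC a x + scaleC a y"
    and scaleC_add_left: "scaleC (a + b) x = scaleC a x + scaleC b x"
    and scaleC_scaleC: "scaleC a (scaleC b x) = scaleC (a * b) x"
    and scaleC_one: "scaleC 1 x = x"
    and cinner_add_left: "cinner (x + y) z = cinner x z + cinner y z"
    and cinner_scaleC_left: "cinner (scaleC a x) y = a * cinner x y"
    and cinner_commute: "cinner y x = cnj (cinner x y)"
    and cinner_self_norm: "cinner x x = complex_of_real ((norm x)\<^sup>2)"

definition bounded_clinear :: "('a::chilbert \<Rightarrow> 'a) \<Rightarrow> bool" where
  "bounded_clinear A \<longleftrightarrow> bounded_linear A \<and> (\<forall>c x. A (c *\<^sub>C x) = c *\<^sub>C A x)"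

definition cspan :: "'a::chilbert set \<Rightarrow> 'a set" where
  "cspan V = {\<Sum>v\<in>V. c v *\<^sub>C v | c. True}"

definition cindependent :: "'a::chilbert set \<Rightarrow> bool" where
  "cindependent V \<longleftrightarrow> finite V \<and>
     (\<forall>c. (\<Sum>v\<in>V. c v *\<^sub>C v) = 0 \<longrightarrow> (\<forall>v\<in>V. c v = 0))"

definition dim_ge :: "'a::chilbert itself \<Rightarrow> nat \<Rightarrow> bool" where
  "dim_ge _ n \<longleftrightarrow> (\<exists>V::'a set. cindependent V \<and> card V = n)"

definition rank_lt :: "('a::chilbert \<Rightarrow> 'a) \<Rightarrow> nat \<Rightarrow> bool" where
  "rank_lt X k \<longleftrightarrow> (\<exists>V. finite V \<and> card V < k \<and> range X \<subseteq> cspan V)"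

text \<open>k-th singular value (k >= 1).\<close>
definition sval :: "nat \<Rightarrow> ('a::chilbert \<Rightarrow> 'a) \<Rightarrow> real" where
  "sval k A = Inf {onorm (\<lambda>v. A v - X v) | X. bounded_clinear X \<and> rank_lt X k}"

text \<open>Rank-one operator x y^*: v maps to <v,y> x.\<close>
definition rank_one :: "'a::chilbert \<Rightarrow> 'a \<Rightarrow> ('a \<Rightarrow> 'a)" where
  "rank_one x y = (\<lambda>v. cinner v y *\<^sub>C x)"

text \<open>Vectors of R^n are represented as functions nat => real, of which only
the coordinates 0..n-1 (i.e. the paper's 1..n) are relevant.\<close>
definition symmetric_norm :: "nat \<Rightarrow> ((nat \<Rightarrow> real) \<Rightarrow> real) \<Rightarrow> bool" where
  "symmetric_norm n f \<longleftrightarrow>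
     (\<forall>x y. (\<forall>i<n. x i = y i) \<longrightarrow> f x = f y) \<and>
     (\<forall>x. f x = 0 \<longleftrightarrow> (\<forall>i<n. x i = 0)) \<and>
     (\<forall>a x. f (\<lambda>i. a * x i) = \<bar>a\<bar> * f x) \<and>
     (\<forall>x y. f (\<lambda>i. x i + y i) \<le> f x + f y) \<and>
     (\<forall>p x. p permutes {..<n} \<longrightarrow> f (x \<circ> p) = f x) \<and>
     (\<forall>e x. (\<forall>i<n. e i = 1 \<or> e i = -1) \<longrightarrow> f (\<lambda>i. e i * x i) = f x)"

definition ui_norm :: "nat \<Rightarrow> ((nat \<Rightarrow> real) \<Rightarrow> real) \<Rightarrow> ('a::chilbert \<Rightarrow> 'a) \<Rightarrow> real" where
  "ui_norm n f A = f (\<lambda>j. sval (Suc j) A)"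

definition first_unit :: "nat \<Rightarrow> real" where
  "first_unit = (\<lambda>i. if i = 0 then 1 else 0)"

end

theory Submission
  imports Defs
begin

text \<open>Everything is decided by the rank-one projection \<open>P = u u\<^sup>*\<close> onto a unit vector \<open>u\<close>:
its singular values are \<open>(1, 0, \<dots>, 0)\<close>, so \<open>\<parallel>P\<parallel> = f(e\<^sub>1)\<close>, \<open>s\<^sub>1(P) = 1\<close> and \<open>P\<^sup>2 = P\<close>.
Submultiplicativity at \<open>(P, P)\<close> gives \<open>f(e\<^sub>1) \<le> f(e\<^sub>1)\<^sup>2\<close>, i.e. \<open>f(e\<^sub>1) \<ge> 1\<close>. Conversely, a
symmetric norm is monotone in the absolute values of the coordinates, so \<open>f(e\<^sub>1) \<ge> 1\<close> gives
\<open>s\<^sub>1(A) \<le> \<parallel>A\<parallel>\<close>; together with \<open>s\<^sub>k(AB) \<le> \<parallel>A\<parallel>\<^sub>s\<^sub>p s\<^sub>k(B)\<close> this yields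
\<open>\<parallel>AB\<parallel> \<le> s\<^sub>1(A) \<parallel>B\<parallel> \<le> \<parallel>A\<parallel> \<parallel>B\<parallel>\<close>. Evaluating the max-formula at \<open>P\<close> shows
\<open>f(e\<^sub>1) = max {c\<^sub>1 | c \<in> S}\<close>.
Finally \<open>s\<^sub>k(I) \<ge> 1\<close> for \<open>k \<le> n \<le> dim H\<close>, so \<open>\<parallel>I\<parallel> = 1\<close> forces \<open>f(1, \<dots>, 1) \<le> 1\<close> and hence
\<open>\<parallel>A\<parallel> \<le> s\<^sub>1(A) f(1, \<dots>, 1) \<le> s\<^sub>1(A) \<le> \<parallel>A\<parallel>\<close>.\<close>

interpretation cvs: vector_space "scaleC :: complex \<Rightarrow> 'a::chilbert \<Rightarrow> 'a"
  by unfold_locales (auto simp: scaleC_add_right scaleC_add_left scaleC_scaleC scaleC_one)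

lemma cspan_eq_span: "finite V \<Longrightarrow> cspan V = cvs.span V"
  unfolding cspan_def cvs.span_finite by auto

lemma cindependent_iff: "cindependent V \<longleftrightarrow> finite V \<and> cvs.independent V"
  unfolding cindependent_def using cvs.dependent_finite by blast

lemma cspan_empty: "cspan {} = {0::'a::chilbert}"
  unfolding cspan_def by simp

lemma cinner_add_right: "cinner x (y + z) = cinner x y + cinner x z"
  by (metis cinner_commute cinner_add_left complex_cnj_add)

lemma cinner_scaleC_right: "cinner x (c *\<^sub>C y) = cnj c * cinner x y"
  by (metis cinner_commute cinner_scaleC_left complex_cnj_mult)

lemma cinner_diff_left: "cinner (x - y) z = cinner x z - cinner y z"
  by (metis cinner_add_left eq_diff_eq)

lemma cinner_diff_right: "cinner x (y - z) = cinner x y - cinner x z"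
  by (metis cinner_add_right eq_diff_eq)

lemma norm_scaleC: "norm (c *\<^sub>C (x::'a::chilbert)) = cmod c * norm x"
proof -
  have "cinner (c *\<^sub>C x) (c *\<^sub>C x) = (c * cnj c) * cinner x x"
    by (simp add: cinner_scaleC_left cinner_scaleC_right mult.assoc)
  also have "c * cnj c = complex_of_real ((cmod c)\<^sup>2)"
    by (rule complex_norm_square[symmetric])
  finally have "(norm (c *\<^sub>C x))\<^sup>2 = (cmod c * norm x)\<^sup>2"
    unfolding cinner_self_norm of_real_mult[symmetric] of_real_eq_iff
    by (simp add: power_mult_distrib)
  thus ?thesis by simp
qed

lemma cauchy_schwarz: "cmod (cinner x y) \<le> norm x * norm (y::'a::chilbert)"
proof (cases "y = 0")
  case True
  have "cinner x 0 = 0" using cinner_scaleC_right[of x 0 x] by simp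
  thus ?thesis using True by simp
next
  case False
  define a where "a = cinner x y"
  define N where "N = (norm y)\<^sup>2"
  have N: "N > 0" using False by (simp add: N_def)
  \<comment> \<open>\<open>z\<close> is the component of \<open>x\<close> orthogonal to \<open>y\<close>.\<close>
  define z where "z = x - (a / N) *\<^sub>C y"
  have "cinner z z = cinner x x - cnj (a/N) * a - (a/N) * cnj a + (a/N) * cnj (a/N) * N"
    unfolding z_def cinner_diff_left cinner_diff_right cinner_scaleC_left cinner_scaleC_right
    using cinner_commute[of x y] cinner_self_norm[of y, folded N_def]
    by (simp add: a_def[symmetric] algebra_simps)
  also have "\<dots> = cinner x x - (a * cnj a) / N"
    using N by (simp add: field_simps)
  also have "\<dots> = complex_of_real ((norm x)\<^sup>2 - (cmod a)\<^sup>2 / N)"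
    by (simp only: cinner_self_norm complex_norm_square[symmetric] of_real_diff of_real_divide)
  finally have "(norm z)\<^sup>2 = (norm x)\<^sup>2 - (cmod a)\<^sup>2 / N"
    by (metis cinner_self_norm of_real_eq_iff)
  hence "(cmod a)\<^sup>2 / N \<le> (norm x)\<^sup>2"
    by (metis diff_ge_0_iff_ge zero_le_power2)
  hence "(cmod a)\<^sup>2 \<le> (norm x * norm y)\<^sup>2"
    using N by (simp add: N_def field_simps)
  thus ?thesis unfolding a_def by (simp add: power2_le_iff_abs_le)
qed

lemma dim_ge_imp_ex_unit_vector:
  assumes "dim_ge TYPE('a::chilbert) n" "0 < n"
  shows "\<exists>u::'a. norm u = 1"
proof -
  obtain V :: "'a set" where V: "cindependent V" "card V = n"
    using assms(1) unfolding dim_ge_def by blast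
  then obtain v where v: "v \<in> V" using assms(2) by fastforce
  have "v \<noteq> 0" using v V(1) cindependent_iff cvs.dependent_zero by blast
  thus ?thesis by (intro exI[of _ "(1 / norm v) *\<^sub>R v"]) simp
qed

lemma onorm_id_eq_one:
  assumes "(u::'a::real_normed_vector) \<noteq> 0"
  shows "onorm (id::'a \<Rightarrow> 'a) = 1"
proof (rule antisym)
  show "onorm (id::'a \<Rightarrow> 'a) \<le> 1"
    using onorm_id_le by (simp add: id_def)
  have "norm (id u) \<le> onorm (id::'a \<Rightarrow> 'a) * norm u"
    by (rule onorm) (rule bounded_linear_ident[folded id_def])
  thus "1 \<le> onorm (id::'a \<Rightarrow> 'a)" using assms by simp
qed

lemma bounded_clinear_imp_bounded_linear: "bounded_clinear A \<Longrightarrow> bounded_linear A"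
  unfolding bounded_clinear_def by simp

lemma bounded_clinear_imp_module_hom:
  "bounded_clinear A \<Longrightarrow> module_hom scaleC scaleC (A::'a::chilbert \<Rightarrow> 'a)"
  unfolding bounded_clinear_def module_hom_def module_hom_axioms_def module_iff_vector_space
  using cvs.vector_space_axioms linear_add bounded_linear.linear by blast

lemma bounded_clinear_zero: "bounded_clinear (\<lambda>_::'a::chilbert. 0::'a)"
  unfolding bounded_clinear_def by simp

lemma bounded_clinear_id: "bounded_clinear (id::'a::chilbert \<Rightarrow> 'a)"
  unfolding bounded_clinear_def by (simp add: bounded_linear_ident[unfolded id_def[symmetric]])

lemma bounded_clinear_compose:
  "bounded_clinear A \<Longrightarrow> bounded_clinear B \<Longrightarrow> bounded_clinear (A \<circ> B)"
  unfolding bounded_clinear_def by (auto simp: o_def intro: bounded_linear_compose)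

lemma bounded_clinear_diff:
  "bounded_clinear A \<Longrightarrow> bounded_clinear B \<Longrightarrow> bounded_clinear (\<lambda>v. A v - B v)"
  unfolding bounded_clinear_def
  by (auto intro: bounded_linear_sub simp: cvs.scale_right_diff_distrib)

lemma bounded_clinear_rank_one: "bounded_clinear (rank_one x (y::'a::chilbert))"
  unfolding bounded_clinear_def rank_one_def
proof safe
  show "bounded_linear (\<lambda>v. cinner v y *\<^sub>C x)"
  proof (rule bounded_linear_intro[where K="norm y * norm x"])
    fix u v show "cinner (u + v) y *\<^sub>C x = cinner u y *\<^sub>C x + cinner v y *\<^sub>C x"
      by (simp add: cinner_add_left scaleC_add_left)
  next
    fix r v show "cinner (r *\<^sub>R v) y *\<^sub>C x = r *\<^sub>R (cinner v y *\<^sub>C x)"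
      by (simp add: scaleC_of_real[symmetric] cinner_scaleC_left)
  next
    fix v show "norm (cinner v y *\<^sub>C x) \<le> norm v * (norm y * norm x)"
      using cauchy_schwarz[of v y] by (simp add: norm_scaleC mult_right_mono mult.assoc[symmetric])
  qed
next
  fix c v show "cinner (c *\<^sub>C v) y *\<^sub>C x = c *\<^sub>C cinner v y *\<^sub>C x"
    by (simp add: cinner_scaleC_left)
qed

lemma onorm_rank_one:
  assumes "norm x = 1" "norm y = 1"
  shows "onorm (rank_one x (y::'a::chilbert)) = 1"
proof (rule antisym)
  show "onorm (rank_one x y) \<le> 1"
  proof (rule onorm_bound)
    fix v show "norm (rank_one x y v) \<le> 1 * norm v"
      using cauchy_schwarz[of v y] assms by (simp add: rank_one_def norm_scaleC)
  qed simp
  have "norm (rank_one x y y) \<le> onorm (rank_one x y) * norm y"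
    by (rule onorm[OF bounded_clinear_imp_bounded_linear[OF bounded_clinear_rank_one]])
  moreover have "rank_one x y y = x"
    using assms by (simp add: rank_one_def cinner_self_norm)
  ultimately show "1 \<le> onorm (rank_one x y)" using assms by simp
qed

lemma rank_one_idempotent:
  assumes "norm (x::'a::chilbert) = 1"
  shows "rank_one x x \<circ> rank_one x x = rank_one x x"
proof
  fix v
  have "cinner x x = 1" using assms by (simp add: cinner_self_norm)
  thus "(rank_one x x \<circ> rank_one x x) v = rank_one x x v"
    by (simp add: rank_one_def cinner_scaleC_left)
qed

section \<open>Singular values\<close>

lemma rank_lt_zero: "1 \<le> k \<Longrightarrow> rank_lt (\<lambda>_::'a::chilbert. 0::'a) k"
  unfolding rank_lt_def by (rule exI[of _ "{}"]) (auto simp: cspan_empty)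

lemma rank_lt_one_imp_zero: "rank_lt (X::'a::chilbert \<Rightarrow> 'a) 1 \<Longrightarrow> X = (\<lambda>_. 0)"
  unfolding rank_lt_def by (auto simp: cspan_empty fun_eq_iff image_subset_iff)

lemma rank_lt_compose:
  assumes "bounded_clinear A" "rank_lt X k"
  shows "rank_lt (A \<circ> (X::'a::chilbert \<Rightarrow> 'a)) k"
proof -
  obtain V where V: "finite V" "card V < k" "range X \<subseteq> cspan V"
    using assms(2) unfolding rank_lt_def by blast
  interpret A: module_hom scaleC scaleC A
    using bounded_clinear_imp_module_hom[OF assms(1)] .
  have "range (A \<circ> X) \<subseteq> A ` cspan V" using V(3) by (auto simp: image_comp[symmetric])
  also have "\<dots> = cspan (A ` V)" using V(1) by (simp add: cspan_eq_span A.span_image)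
  finally show ?thesis unfolding rank_lt_def
    using V(1,2) card_image_le[OF V(1), of A] by (intro exI[of _ "A ` V"]) auto
qed

lemma sval_le:
  assumes "bounded_clinear A" "bounded_clinear X" "rank_lt X k"
  shows "sval k A \<le> onorm (\<lambda>v. A v - X v)"
  unfolding sval_def
proof (rule cInf_lower)
  show "bdd_below {onorm (\<lambda>v. A v - X v) |X. bounded_clinear X \<and> rank_lt X k}"
    by (rule bdd_belowI[of _ 0])
      (auto intro!: onorm_pos_le bounded_clinear_imp_bounded_linear bounded_clinear_diff assms)
qed (use assms in blast)

lemma sval_ge:
  assumes "1 \<le> k" "\<And>X. bounded_clinear X \<Longrightarrow> rank_lt X k \<Longrightarrow> c \<le> onorm (\<lambda>v. A v - X v)"
  shows "c \<le> sval k (A::'a::chilbert \<Rightarrow> 'a)"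
  unfolding sval_def
proof (rule cInf_greatest)
  show "{onorm (\<lambda>v. A v - X v) |X. bounded_clinear X \<and> rank_lt X k} \<noteq> {}"
    using bounded_clinear_zero rank_lt_zero[OF assms(1)] by blast
qed (use assms in blast)

lemma sval_nonneg:
  assumes "bounded_clinear A" "1 \<le> k"
  shows "0 \<le> sval k (A::'a::chilbert \<Rightarrow> 'a)"
  by (rule sval_ge[OF assms(2)])
    (auto intro!: onorm_pos_le bounded_clinear_imp_bounded_linear bounded_clinear_diff assms)

lemma sval_le_onorm:
  assumes "bounded_clinear A" "1 \<le> k"
  shows "sval k (A::'a::chilbert \<Rightarrow> 'a) \<le> onorm A"
  using sval_le[OF assms(1) bounded_clinear_zero rank_lt_zero[OF assms(2)]] by simp

lemma sval_one_eq_onorm: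
  assumes "bounded_clinear A"
  shows "sval 1 (A::'a::chilbert \<Rightarrow> 'a) = onorm A"
proof (rule antisym)
  show "sval 1 A \<le> onorm A" using sval_le_onorm[OF assms] by simp
  show "onorm A \<le> sval 1 A"
    by (rule sval_ge) (auto dest!: rank_lt_one_imp_zero[unfolded One_nat_def])
qed

lemma sval_compose_le:
  assumes A: "bounded_clinear A" and B: "bounded_clinear B" and k: "1 \<le> k"
  shows "sval k (A \<circ> B) \<le> onorm A * sval k (B::'a::chilbert \<Rightarrow> 'a)"
proof -
  interpret A: module_hom scaleC scaleC A
    using bounded_clinear_imp_module_hom[OF A] .
  \<comment> \<open>an approximant \<open>X\<close> of \<open>B\<close> of rank \<open>< k\<close> yields the approximant \<open>A \<circ> X\<close> of \<open>A \<circ> B\<close>\<close>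
  have approx: "sval k (A \<circ> B) \<le> onorm A * onorm (\<lambda>v. B v - X v)"
    if X: "bounded_clinear X" "rank_lt X k" for X
  proof -
    have "sval k (A \<circ> B) \<le> onorm (\<lambda>v. (A \<circ> B) v - (A \<circ> X) v)"
      by (intro sval_le bounded_clinear_compose rank_lt_compose A B X)
    also have "(\<lambda>v. (A \<circ> B) v - (A \<circ> X) v) = A \<circ> (\<lambda>v. B v - X v)"
      by (auto simp: A.diff)
    also have "onorm \<dots> \<le> onorm A * onorm (\<lambda>v. B v - X v)"
      by (intro onorm_compose bounded_clinear_imp_bounded_linear bounded_clinear_diff A B X)
    finally show ?thesis .
  qed
  show ?thesis
  proof (cases "onorm A = 0")
    case True
    thus ?thesis using approx[OF bounded_clinear_zero rank_lt_zero[OF k]] by simp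
  next
    case False
    hence pos: "0 < onorm A"
      using onorm_pos_le[OF bounded_clinear_imp_bounded_linear[OF A]] by simp
    have "sval k (A \<circ> B) / onorm A \<le> sval k B"
      by (rule sval_ge[OF k]) (use approx pos in \<open>auto simp: divide_le_eq mult.commute\<close>)
    thus ?thesis using pos by (simp add: divide_le_eq mult.commute)
  qed
qed

lemma sval_rank_one:
  assumes "norm x = 1" "norm y = 1"
  shows "sval (Suc j) (rank_one x (y::'a::chilbert)) = first_unit j"
proof (cases j)
  case 0
  thus ?thesis using sval_one_eq_onorm[OF bounded_clinear_rank_one, of x y] onorm_rank_one[OF assms]
    by (simp add: first_unit_def)
next
  case (Suc m)
  have rank: "rank_lt (rank_one x y) (Suc j)"
    unfolding rank_lt_def
    by (rule exI[of _ "{x}"]) (auto simp: Suc cspan_def rank_one_def)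
  have "sval (Suc j) (rank_one x y) \<le> 0"
    using sval_le[OF bounded_clinear_rank_one[of x y] bounded_clinear_rank_one rank]
    by (simp add: onorm_zero)
  moreover have "0 \<le> sval (Suc j) (rank_one x y)"
    by (rule sval_nonneg[OF bounded_clinear_rank_one]) simp
  ultimately show ?thesis using Suc by (simp add: first_unit_def)
qed

text \<open>A subspace of dimension \<open>n\<close> meets the kernel of any operator of rank \<open>< k \<le> n\<close>.\<close>

lemma sval_id_ge_one:
  assumes dim: "dim_ge TYPE('a::chilbert) n" and k: "1 \<le> k" "k \<le> n"
  shows "1 \<le> sval k (id::'a \<Rightarrow> 'a)"
proof (rule sval_ge[OF k(1)])
  obtain V :: "'a set" where V: "cindependent V" "card V = n"
    using dim unfolding dim_ge_def by blast
  have V_fin: "finite V" and V_indep: "cvs.independent V" using V(1) cindependent_iff by auto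
  fix X :: "'a \<Rightarrow> 'a" assume X: "bounded_clinear X" "rank_lt X k"
  obtain W where W: "finite W" "card W < k" "range X \<subseteq> cspan W"
    using X(2) unfolding rank_lt_def by blast
  interpret X: module_hom scaleC scaleC X using bounded_clinear_imp_module_hom[OF X(1)] .
  have "\<exists>v\<in>cvs.span V. v \<noteq> 0 \<and> X v = 0"
  proof (rule ccontr)
    assume "\<not> ?thesis"
    hence inj: "inj_on X (cvs.span V)"
      using X.inj_on_iff_eq_0[OF cvs.subspace_span] by blast
    hence "cvs.independent (X ` V)" by (rule X.independent_injective_image[OF V_indep])
    moreover have "X ` V \<subseteq> cvs.span W" using W(3) cspan_eq_span[OF W(1)] by auto
    ultimately have "card (X ` V) \<le> card W" using cvs.independent_span_bound[OF W(1)] by blast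
    moreover have "card (X ` V) = card V"
      using inj by (intro card_image) (meson inj_on_subset cvs.span_superset)
    ultimately show False using W(2) k V(2) by simp
  qed
  then obtain v where v: "v \<noteq> 0" "X v = 0" by blast
  have "norm (id v - X v) \<le> onorm (\<lambda>u. id u - X u) * norm v"
    by (intro onorm bounded_clinear_imp_bounded_linear bounded_clinear_diff bounded_clinear_id X(1))
  thus "1 \<le> onorm (\<lambda>u. id u - X u)" using v by simp
qed

section \<open>Symmetric norms\<close>

lemma symmetric_norm_cong:
  "symmetric_norm n f \<Longrightarrow> (\<And>i. i < n \<Longrightarrow> x i = y i) \<Longrightarrow> f x = f y"
  unfolding symmetric_norm_def by blast

lemma symmetric_norm_eq_0_iff: "symmetric_norm n f \<Longrightarrow> f x = 0 \<longleftrightarrow> (\<forall>i<n. x i = 0)"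
  unfolding symmetric_norm_def by blast

lemma symmetric_norm_homogeneous: "symmetric_norm n f \<Longrightarrow> f (\<lambda>i. a * x i) = \<bar>a\<bar> * f x"
  unfolding symmetric_norm_def by blast

lemma symmetric_norm_triangle: "symmetric_norm n f \<Longrightarrow> f (\<lambda>i. x i + y i) \<le> f x + f y"
  unfolding symmetric_norm_def by blast

lemma symmetric_norm_sign_change:
  "symmetric_norm n f \<Longrightarrow> (\<And>i. i < n \<Longrightarrow> e i = 1 \<or> e i = -1) \<Longrightarrow> f (\<lambda>i. e i * x i) = f x"
  unfolding symmetric_norm_def by blast

lemma symmetric_norm_nonneg:
  assumes f: "symmetric_norm n f"
  shows "0 \<le> f x"
proof -
  have "f (\<lambda>i. x i + (-1) * x i) \<le> f x + f (\<lambda>i. (-1) * x i)"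
    by (rule symmetric_norm_triangle[OF f])
  moreover have "f (\<lambda>i. x i + (-1) * x i) = 0" using symmetric_norm_eq_0_iff[OF f] by simp
  moreover have "f (\<lambda>i. (-1) * x i) = f x" using symmetric_norm_homogeneous[OF f, of "-1" x] by simp
  ultimately show ?thesis by simp
qed

text \<open>Shrinking one coordinate in absolute value: \<open>x\<close> is a convex combination of \<open>y\<close> and
of \<open>y\<close> with the sign of that coordinate flipped.\<close>

lemma symmetric_norm_mono_coordinate:
  assumes f: "symmetric_norm n f" and same: "\<And>i. i \<noteq> k \<Longrightarrow> x i = y i"
    and le: "\<bar>x k\<bar> \<le> \<bar>y k\<bar>"
  shows "f x \<le> f y"
proof (cases "y k = 0")
  case True
  hence "x = y" using same le by (metis abs_le_zero_iff abs_zero ext)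
  thus ?thesis by simp
next
  case False
  define t where "t = (1 + x k / y k) / 2"
  have "\<bar>x k / y k\<bar> \<le> 1" using le False by (simp add: divide_le_eq_1)
  hence t: "0 \<le> t" "t \<le> 1" unfolding t_def abs_le_iff by auto
  define y' where "y' = (\<lambda>i. (if i = k then -1 else 1) * y i)"
  have "f y' = f y" unfolding y'_def by (rule symmetric_norm_sign_change[OF f]) simp
  have "x = (\<lambda>i. t * y i + (1 - t) * y' i)"
  proof
    fix i show "x i = t * y i + (1 - t) * y' i"
      using False same[of i] by (cases "i = k") (simp_all add: y'_def t_def field_simps)
  qed
  hence "f x \<le> f (\<lambda>i. t * y i) + f (\<lambda>i. (1 - t) * y' i)"
    using symmetric_norm_triangle[OF f] by metis
  also have "\<dots> = t * f y + (1 - t) * f y"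
    using t \<open>f y' = f y\<close> by (simp add: symmetric_norm_homogeneous[OF f])
  finally show ?thesis by (simp add: algebra_simps)
qed

lemma symmetric_norm_mono:
  assumes f: "symmetric_norm n f" and le: "\<And>i. i < n \<Longrightarrow> \<bar>x i\<bar> \<le> \<bar>y i\<bar>"
  shows "f x \<le> f y"
proof -
  define z where "z m = (\<lambda>i. if i < m then x i else y i)" for m
  have "m \<le> n \<Longrightarrow> f (z m) \<le> f y" for m
  proof (induction m)
    case 0
    thus ?case by (simp add: z_def)
  next
    case (Suc m)
    have "f (z (Suc m)) \<le> f (z m)"
      by (rule symmetric_norm_mono_coordinate[OF f, of m]) (use Suc.prems le in \<open>auto simp: z_def\<close>)
    thus ?case using Suc by simp
  qed
  moreover have "f x = f (z n)" by (rule symmetric_norm_cong[OF f]) (simp add: z_def)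
  ultimately show ?thesis by simp
qed

lemma symmetric_norm_first_unit_pos:
  assumes "symmetric_norm n f" "0 < n"
  shows "0 < f first_unit"
  using symmetric_norm_nonneg[OF assms(1), of first_unit]
    symmetric_norm_eq_0_iff[OF assms(1), of first_unit] assms(2)
  by (fastforce simp: first_unit_def)

definition submultiplicative :: "(('a::chilbert \<Rightarrow> 'a) \<Rightarrow> real) \<Rightarrow> bool" where
  "submultiplicative N \<longleftrightarrow>
     (\<forall>A B. bounded_clinear A \<longrightarrow> bounded_clinear B \<longrightarrow> N (A \<circ> B) \<le> N A * N B)"

lemma ui_norm_nonneg: "symmetric_norm n f \<Longrightarrow> 0 \<le> ui_norm n f A"
  unfolding ui_norm_def by (rule symmetric_norm_nonneg)

lemma ui_norm_rank_one:
  assumes "norm x = 1" "norm y = 1"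
  shows "ui_norm n f (rank_one x (y::'a::chilbert)) = f first_unit"
  unfolding ui_norm_def using sval_rank_one[OF assms] by (simp add: fun_eq_iff)

lemma sval_one_le_ui_norm:
  assumes f: "symmetric_norm n f" and e: "1 \<le> f first_unit" and A: "bounded_clinear A"
  shows "sval 1 (A::'a::chilbert \<Rightarrow> 'a) \<le> ui_norm n f A"
proof -
  have s: "0 \<le> sval 1 A" by (rule sval_nonneg[OF A]) simp
  have "sval 1 A \<le> \<bar>sval 1 A\<bar> * f first_unit" using e s by (simp add: mult_le_cancel_left1)
  also have "\<dots> = f (\<lambda>i. sval 1 A * first_unit i)" by (simp add: symmetric_norm_homogeneous[OF f])
  also have "\<dots> \<le> ui_norm n f A" unfolding ui_norm_def
    by (rule symmetric_norm_mono[OF f]) (auto simp: first_unit_def intro: sval_nonneg[OF A])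
  finally show ?thesis .
qed

lemma ui_norm_compose_le:
  assumes f: "symmetric_norm n f" and A: "bounded_clinear A" and B: "bounded_clinear B"
  shows "ui_norm n f (A \<circ> B) \<le> onorm A * ui_norm n f (B::'a::chilbert \<Rightarrow> 'a)"
proof -
  have oA: "0 \<le> onorm A" by (rule onorm_pos_le[OF bounded_clinear_imp_bounded_linear[OF A]])
  have "ui_norm n f (A \<circ> B) \<le> f (\<lambda>j. onorm A * sval (Suc j) B)" unfolding ui_norm_def
    by (rule symmetric_norm_mono[OF f])
      (use oA sval_compose_le[OF A B] sval_nonneg[OF bounded_clinear_compose[OF A B]]
        sval_nonneg[OF B] in auto)
  also have "\<dots> = onorm A * ui_norm n f B"
    using oA by (simp add: symmetric_norm_homogeneous[OF f] ui_norm_def)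
  finally show ?thesis .
qed

lemma ui_norm_le_onorm:
  assumes f: "symmetric_norm n f" and A: "bounded_clinear A"
  shows "ui_norm n f (A::'a::chilbert \<Rightarrow> 'a) \<le> onorm A * f (\<lambda>_. 1)"
proof -
  have oA: "0 \<le> onorm A" by (rule onorm_pos_le[OF bounded_clinear_imp_bounded_linear[OF A]])
  have "ui_norm n f A \<le> f (\<lambda>_. onorm A * 1)" unfolding ui_norm_def
    by (rule symmetric_norm_mono[OF f]) (use oA sval_nonneg[OF A] sval_le_onorm[OF A] in auto)
  also have "\<dots> = onorm A * f (\<lambda>_. 1)"
    using symmetric_norm_homogeneous[OF f, of "onorm A" "\<lambda>_. 1"] oA by simp
  finally show ?thesis .
qed

lemma ui_norm_id_ge:
  assumes f: "symmetric_norm n f" and dim: "dim_ge TYPE('a::chilbert) n"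
  shows "f (\<lambda>_. 1) \<le> ui_norm n f (id::'a \<Rightarrow> 'a)"
  unfolding ui_norm_def
proof (rule symmetric_norm_mono[OF f])
  fix i assume "i < n"
  hence "1 \<le> sval (Suc i) (id::'a \<Rightarrow> 'a)" by (intro sval_id_ge_one[OF dim]) auto
  thus "\<bar>1::real\<bar> \<le> \<bar>sval (Suc i) (id::'a \<Rightarrow> 'a)\<bar>" by simp
qed

lemma submultiplicative_ui_norm_iff:
  assumes f: "symmetric_norm n f" and n: "0 < n" and u: "norm (u::'a::chilbert) = 1"
  shows "submultiplicative (ui_norm n f :: ('a \<Rightarrow> 'a) \<Rightarrow> real) \<longleftrightarrow> 1 \<le> f first_unit"
proof
  assume "submultiplicative (ui_norm n f :: ('a \<Rightarrow> 'a) \<Rightarrow> real)"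
  hence "ui_norm n f (rank_one u u \<circ> rank_one u u)
           \<le> ui_norm n f (rank_one u u) * ui_norm n f (rank_one u u)"
    unfolding submultiplicative_def using bounded_clinear_rank_one by blast
  hence "f first_unit \<le> f first_unit * f first_unit"
    by (simp add: rank_one_idempotent[OF u] ui_norm_rank_one[OF u u])
  thus "1 \<le> f first_unit" using symmetric_norm_first_unit_pos[OF f n] by simp
next
  assume e: "1 \<le> f first_unit"
  show "submultiplicative (ui_norm n f :: ('a \<Rightarrow> 'a) \<Rightarrow> real)"
    unfolding submultiplicative_def
  proof (intro allI impI)
    fix A B :: "'a \<Rightarrow> 'a" assume A: "bounded_clinear A" and B: "bounded_clinear B"
    have "ui_norm n f (A \<circ> B) \<le> onorm A * ui_norm n f B"
      by (rule ui_norm_compose_le[OF f A B])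
    also have "\<dots> \<le> ui_norm n f A * ui_norm n f B"
      by (rule mult_right_mono)
        (use sval_one_le_ui_norm[OF f e A] sval_one_eq_onorm[OF A] ui_norm_nonneg[OF f] in auto)
    finally show "ui_norm n f (A \<circ> B) \<le> ui_norm n f A * ui_norm n f B" .
  qed
qed

lemma sval_one_le_ui_norm_iff:
  assumes f: "symmetric_norm n f" and u: "norm (u::'a::chilbert) = 1"
  shows "(\<forall>A::'a \<Rightarrow> 'a. bounded_clinear A \<longrightarrow> sval 1 A \<le> ui_norm n f A) \<longleftrightarrow> 1 \<le> f first_unit"
  using sval_one_le_ui_norm[OF f] bounded_clinear_rank_one[of u u]
    sval_rank_one[OF u u, of 0] ui_norm_rank_one[OF u u]
  by (metis One_nat_def first_unit_def)

lemma ex_rank_one_ui_norm_ge_one_iff: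
  assumes u: "norm (u::'a::chilbert) = 1"
  shows "(\<exists>x y::'a. norm x = 1 \<and> norm y = 1 \<and> 1 \<le> ui_norm n f (rank_one x y))
           \<longleftrightarrow> 1 \<le> f first_unit"
  using ui_norm_rank_one u by metis

lemma first_unit_eq_max_first_coordinate:
  assumes n: "0 < n" and u: "norm (u::'a::chilbert) = 1"
    and S_max: "\<forall>A::'a \<Rightarrow> 'a. bounded_clinear A \<longrightarrow>
        (\<exists>c\<in>S. ui_norm n f A = (\<Sum>j<n. c j * sval (Suc j) A)) \<and>
        (\<forall>c\<in>S. (\<Sum>j<n. c j * sval (Suc j) A) \<le> ui_norm n f A)"
  shows "(\<exists>c\<in>S. c 0 = f first_unit) \<and> (\<forall>c\<in>S. c 0 \<le> f first_unit)"
proof -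
  have sum_P: "(\<Sum>j<n. c j * sval (Suc j) (rank_one u u)) = c 0" for c :: "nat \<Rightarrow> real"
    using n by (simp add: sval_rank_one[OF u u] first_unit_def if_distrib cong: if_cong)
  show ?thesis
    using S_max[rule_format, OF bounded_clinear_rank_one[of u u]]
    unfolding sum_P ui_norm_rank_one[OF u u] by auto
qed

lemma algebra_norm_iff_ui_norm_eq_onorm:
  assumes f: "symmetric_norm n f" and dim: "dim_ge TYPE('a::chilbert) n" and n: "0 < n"
  shows "(submultiplicative (ui_norm n f :: ('a \<Rightarrow> 'a) \<Rightarrow> real) \<and> ui_norm n f (id::'a \<Rightarrow> 'a) = 1)
           \<longleftrightarrow> (\<forall>A::'a \<Rightarrow> 'a. bounded_clinear A \<longrightarrow> ui_norm n f A = onorm A)"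
proof -
  obtain u :: 'a where u: "norm u = 1" using dim_ge_imp_ex_unit_vector[OF dim n] by blast
  have onorm_id: "onorm (id::'a \<Rightarrow> 'a) = 1" by (rule onorm_id_eq_one[of u]) (use u in auto)
  show ?thesis
  proof
    assume sub: "submultiplicative (ui_norm n f :: ('a \<Rightarrow> 'a) \<Rightarrow> real)
                 \<and> ui_norm n f (id::'a \<Rightarrow> 'a) = 1"
    hence e: "1 \<le> f first_unit" using submultiplicative_ui_norm_iff[OF f n u] by simp
    have f1: "f (\<lambda>_. 1) \<le> 1" using ui_norm_id_ge[OF f dim] sub by simp
    show "\<forall>A::'a \<Rightarrow> 'a. bounded_clinear A \<longrightarrow> ui_norm n f A = onorm A"
    proof (intro allI impI antisym)
      fix A :: "'a \<Rightarrow> 'a" assume A: "bounded_clinear A"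
      have "0 \<le> onorm A" by (rule onorm_pos_le[OF bounded_clinear_imp_bounded_linear[OF A]])
      thus "ui_norm n f A \<le> onorm A"
        using ui_norm_le_onorm[OF f A] f1 by (meson dual_order.trans mult_left_le)
      show "onorm A \<le> ui_norm n f A"
        using sval_one_le_ui_norm[OF f e A] sval_one_eq_onorm[OF A] by simp
    qed
  next
    assume eq: "\<forall>A::'a \<Rightarrow> 'a. bounded_clinear A \<longrightarrow> ui_norm n f A = onorm A"
    thus "submultiplicative (ui_norm n f :: ('a \<Rightarrow> 'a) \<Rightarrow> real) \<and> ui_norm n f (id::'a \<Rightarrow> 'a) = 1"
      unfolding submultiplicative_def
      using bounded_clinear_compose bounded_clinear_imp_bounded_linear onorm_compose
        bounded_clinear_id onorm_id
      by metis
  qed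
qed

theorem proposition2p4:
  fixes n :: nat
    and f :: "(nat \<Rightarrow> real) \<Rightarrow> real"
    and S :: "(nat \<Rightarrow> real) set"
  assumes n_pos: "n \<ge> 1"
    and f_sym: "symmetric_norm n f"
    and dimH: "dim_ge TYPE('h::chilbert) n"
    and S_compact: "compact S"
    and S_support: "\<forall>c\<in>S. \<forall>i\<ge>n. c i = 0"
    and S_decr: "\<forall>c\<in>S. \<forall>i j. i \<le> j \<and> j < n \<longrightarrow> c j \<le> c i"
    and S_nonneg: "\<forall>c\<in>S. c (n - 1) \<ge> 0"
    and S_max: "\<forall>A::'h \<Rightarrow> 'h. bounded_clinear A \<longrightarrow>
        (\<exists>c\<in>S. ui_norm n f A = (\<Sum>j<n. c j * sval (Suc j) A)) \<and>
        (\<forall>c\<in>S. (\<Sum>j<n. c j * sval (Suc j) A) \<le> ui_norm n f A)"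
  shows "((\<forall>A B::'h \<Rightarrow> 'h. bounded_clinear A \<longrightarrow> bounded_clinear B \<longrightarrow>
              ui_norm n f (A \<circ> B) \<le> ui_norm n f A * ui_norm n f B)
          \<longleftrightarrow> (\<forall>A::'h \<Rightarrow> 'h. bounded_clinear A \<longrightarrow> ui_norm n f A \<ge> sval 1 A))
       \<and> ((\<forall>A B::'h \<Rightarrow> 'h. bounded_clinear A \<longrightarrow> bounded_clinear B \<longrightarrow>
              ui_norm n f (A \<circ> B) \<le> ui_norm n f A * ui_norm n f B)
          \<longleftrightarrow> (\<exists>x y::'h. norm x = 1 \<and> norm y = 1 \<and> ui_norm n f (rank_one x y) \<ge> 1))
       \<and> ((\<forall>A B::'h \<Rightarrow> 'h. bounded_clinear A \<longrightarrow> bounded_clinear B \<longrightarrow>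
              ui_norm n f (A \<circ> B) \<le> ui_norm n f A * ui_norm n f B)
          \<longleftrightarrow> f first_unit \<ge> 1)
       \<and> ((\<forall>A B::'h \<Rightarrow> 'h. bounded_clinear A \<longrightarrow> bounded_clinear B \<longrightarrow>
              ui_norm n f (A \<circ> B) \<le> ui_norm n f A * ui_norm n f B)
          \<longleftrightarrow> (\<exists>c\<in>S. c 0 \<ge> 1))
       \<and> (((\<forall>A B::'h \<Rightarrow> 'h. bounded_clinear A \<longrightarrow> bounded_clinear B \<longrightarrow>
              ui_norm n f (A \<circ> B) \<le> ui_norm n f A * ui_norm n f B)
            \<and> ui_norm n f (id::'h \<Rightarrow> 'h) = 1)
          \<longleftrightarrow> (\<forall>A::'h \<Rightarrow> 'h. bounded_clinear A \<longrightarrow> ui_norm n f A = onorm A))"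
proof -
  have n: "0 < n" using n_pos by simp
  obtain u :: 'h where u: "norm u = 1" using dim_ge_imp_ex_unit_vector[OF dimH n] by blast
  note submult = submultiplicative_ui_norm_iff[OF f_sym n u, unfolded submultiplicative_def]
  note algebra_norm = algebra_norm_iff_ui_norm_eq_onorm[OF f_sym dimH n,
      unfolded submultiplicative_def]
  have S_first: "(\<exists>c\<in>S. 1 \<le> c 0) \<longleftrightarrow> 1 \<le> f first_unit"
    using first_unit_eq_max_first_coordinate[OF n u S_max] by (metis order.trans)
  show ?thesis
    using submult algebra_norm S_first sval_one_le_ui_norm_iff[OF f_sym u]
      ex_rank_one_ui_norm_ge_one_iff[OF u]
    by blast
qed

end
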